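(* Let $\gamma\in\{0\}\cup(0,\infty)\cup\{\infty\}$. The following three problems are equivalent (in particular, their optimal values coincide): 1) The max-flow problem $\sup\ \sum_{x\in V}p_s(x)+\sum_{i=1}^n(\rho_i^1S_i^\ell-\rho_i^2S_i^u)$ over $p_s,p_i:V\to\mathbb{R}$, $q_i:V\times V\to\mathbb{R}$, $\rho_i^1,\rho_i^2$, subject to, for all $i\in I$: $|q_i(x,y)|\le1$ for all $(x,y)$ with $\{x,y\}\in E$; $p_i(x)\le C_i(x)$ for all $x$; $(\mathrm{div}_wq_i)(x)-p_s(x)+p_i(x)=\rho_i^1-\rho_i^2$ for all $x$; $0\le\rho_i^1,\rho_i^2\le\gamma$. 2) The primal-dual problem $$\min_{u:V\to\mathbb{R}^n}\ \sup_{p_s,p,q,\rho^1,\rho^2}\ \sum_{x\in V}p_s(x)+\sum_{i=1}^n(\rho_i^1S_i^\ell-\rho_i^2S_i^u)+\sum_{i=1}^n\sum_{x\in V}u_i(x)\big((\mathrm{div}_wq_i)(x)-p_s(x)+p_i(x)+\rho_i^2-\rho_i^1\big),$$ where the supremum is subject to $|q_i(x,y)|\le1$ for $\{x,y\}\in E$, $p_i(x)\le C_i(x)$ for all $x$, and $0\le\rho_i^1,\rho_i^2\le\gamma$, and $u$ is unconstrained. 3) The convex relaxed problem $\min_{u\in\mathcal{B}'}\sum_{i=1}^n\sum_{x\in V}C_i(x)u_i(x)+\sum_{i=1}^nTV_w(u_i)$ subject to the size constraints $S_i^\ell\le\|u_i\|\le S_i^u$ for all $i$ if $\gamma=\infty$,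 with the size penalty $\sum_{i=1}^nP_\gamma(\|u_i\|)$ added to the energy if $0<\gamma<\infty$, and with no size constraints if $\gamma=0$.
   Context: Let $G=(V,E)$ be a finite undirected graph with symmetric weights $w(x,y)=w(y,x)>0$ for $\{x,y\}\in E$ and $w(x,y)=0$ otherwise. $TV_w(v)=\frac12\sum_{x,y\in V}w(x,y)|v(y)-v(x)|$ for $v:V\to\mathbb{R}$. For $\phi:V\times V\to\mathbb{R}$, $(\mathrm{div}_w\phi)(x)=\frac12\sum_{y\in V}w(x,y)(\phi(x,y)-\phi(y,x))$. Let $n\ge2$, $I=\{1,\dots,n\}$, $C_i:V\to\mathbb{R}$ given; $\|u_i\|=\sum_xu_i(x)$; $\mathcal{B}'=\{u:V\to[0,1]^n:\sum_iu_i(x)=1\ \forall x\}$. Size bounds are integers $0\le S_i^\ell\le S_i^u$ with $\sum_iS_i^\ell\le|V|\le\sum_iS_i^u$; for $0<\gamma<\infty$, $P_\gamma(t)=0$ if $S_i^\ell\le t\le S_i^u$, $\gamma(t-S_i^u)$ if $t>S_i^u$, $\gamma(S_i^\ell-t)$ if $t<S_i^\ell$. For $\gamma=\infty$, $[0,\gamma]$ means $[0,\infty)$. *)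

theory Defs
  imports "HOL-Analysis.Analysis"
begin

text \<open>Weighted graph on a finite vertex set V with weights w; edges are the pairs with w x y > 0.
  Labels are indexed by I = {1..n}; functions on V are functions on the vertex type whose
  values outside V are irrelevant.\<close>

definition TV_w :: "'v set \<Rightarrow> ('v \<Rightarrow> 'v \<Rightarrow> real) \<Rightarrow> ('v \<Rightarrow> real) \<Rightarrow> real" where
  "TV_w V w v = (1/2) * (\<Sum>x\<in>V. \<Sum>y\<in>V. w x y * \<bar>v y - v x\<bar>)"

definition div_w :: "'v set \<Rightarrow> ('v \<Rightarrow> 'v \<Rightarrow> real) \<Rightarrow> ('v \<Rightarrow> 'v \<Rightarrow> real) \<Rightarrow> 'v \<Rightarrow> real" where
  "div_w V w \<phi> x = (1/2) * (\<Sum>y\<in>V. w x y * (\<phi> x y - \<phi> y x))"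

definition unorm :: "'v set \<Rightarrow> ('v \<Rightarrow> real) \<Rightarrow> real" where
  "unorm V f = (\<Sum>x\<in>V. f x)"

definition Bprime :: "'v set \<Rightarrow> nat \<Rightarrow> (nat \<Rightarrow> 'v \<Rightarrow> real) set" where
  "Bprime V n = {u. (\<forall>x\<in>V. (\<forall>i\<in>{1..n}. 0 \<le> u i x \<and> u i x \<le> 1) \<and> (\<Sum>i\<in>{1..n}. u i x) = 1)}"

definition P_pen :: "real \<Rightarrow> (nat \<Rightarrow> nat) \<Rightarrow> (nat \<Rightarrow> nat) \<Rightarrow> nat \<Rightarrow> real \<Rightarrow> real" where
  "P_pen g Sl Su i t =
     (if real (Sl i) \<le> t \<and> t \<le> real (Su i) then 0
      else if t > real (Su i) then g * (t - real (Su i))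
      else g * (real (Sl i) - t))"

definition dual_box ::
  "'v set \<Rightarrow> ('v \<Rightarrow> 'v \<Rightarrow> real) \<Rightarrow> nat \<Rightarrow> (nat \<Rightarrow> 'v \<Rightarrow> real) \<Rightarrow> ereal \<Rightarrow>
   (nat \<Rightarrow> 'v \<Rightarrow> real) \<Rightarrow> (nat \<Rightarrow> 'v \<Rightarrow> 'v \<Rightarrow> real) \<Rightarrow> (nat \<Rightarrow> real) \<Rightarrow> (nat \<Rightarrow> real) \<Rightarrow> bool" where
  "dual_box V w n C \<gamma> p q r1 r2 \<longleftrightarrow>
     (\<forall>i\<in>{1..n}.
        (\<forall>x\<in>V. \<forall>y\<in>V. w x y > 0 \<longrightarrow> \<bar>q i x y\<bar> \<le> 1) \<and>
        (\<forall>x\<in>V. p i x \<le> C i x) \<and>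
        0 \<le> r1 i \<and> ereal (r1 i) \<le> \<gamma> \<and> 0 \<le> r2 i \<and> ereal (r2 i) \<le> \<gamma>)"

definition flow_obj :: "'v set \<Rightarrow> nat \<Rightarrow> (nat \<Rightarrow> nat) \<Rightarrow> (nat \<Rightarrow> nat) \<Rightarrow>
   ('v \<Rightarrow> real) \<Rightarrow> (nat \<Rightarrow> real) \<Rightarrow> (nat \<Rightarrow> real) \<Rightarrow> real" where
  "flow_obj V n Sl Su ps r1 r2 =
     (\<Sum>x\<in>V. ps x) + (\<Sum>i\<in>{1..n}. r1 i * real (Sl i) - r2 i * real (Su i))"

definition maxflow_value ::
  "'v set \<Rightarrow> ('v \<Rightarrow> 'v \<Rightarrow> real) \<Rightarrow> nat \<Rightarrow> (nat \<Rightarrow> 'v \<Rightarrow> real) \<Rightarrow> (nat \<Rightarrow> nat) \<Rightarrow> (nat \<Rightarrow> nat)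
   \<Rightarrow> ereal \<Rightarrow> ereal" where
  "maxflow_value V w n C Sl Su \<gamma> =
     Sup {ereal (flow_obj V n Sl Su ps r1 r2) | ps p q r1 r2.
            dual_box V w n C \<gamma> p q r1 r2 \<and>
            (\<forall>i\<in>{1..n}. \<forall>x\<in>V. div_w V w (q i) x - ps x + p i x = r1 i - r2 i)}"

definition pd_inner ::
  "'v set \<Rightarrow> ('v \<Rightarrow> 'v \<Rightarrow> real) \<Rightarrow> nat \<Rightarrow> (nat \<Rightarrow> 'v \<Rightarrow> real) \<Rightarrow> (nat \<Rightarrow> nat) \<Rightarrow> (nat \<Rightarrow> nat)
   \<Rightarrow> ereal \<Rightarrow> (nat \<Rightarrow> 'v \<Rightarrow> real) \<Rightarrow> ereal" where
  "pd_inner V w n C Sl Su \<gamma> u =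
     Sup {ereal (flow_obj V n Sl Su ps r1 r2 +
                 (\<Sum>i\<in>{1..n}. \<Sum>x\<in>V. u i x * (div_w V w (q i) x - ps x + p i x + r2 i - r1 i)))
          | ps p q r1 r2. dual_box V w n C \<gamma> p q r1 r2}"

definition pd_value ::
  "'v set \<Rightarrow> ('v \<Rightarrow> 'v \<Rightarrow> real) \<Rightarrow> nat \<Rightarrow> (nat \<Rightarrow> 'v \<Rightarrow> real) \<Rightarrow> (nat \<Rightarrow> nat) \<Rightarrow> (nat \<Rightarrow> nat)
   \<Rightarrow> ereal \<Rightarrow> ereal" where
  "pd_value V w n C Sl Su \<gamma> = (INF u. pd_inner V w n C Sl Su \<gamma> u)"

definition relax_energy ::
  "'v set \<Rightarrow> ('v \<Rightarrow> 'v \<Rightarrow> real) \<Rightarrow> nat \<Rightarrow> (nat \<Rightarrow> 'v \<Rightarrow> real) \<Rightarrow> (nat \<Rightarrow> nat) \<Rightarrow> (nat \<Rightarrow> nat)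
   \<Rightarrow> ereal \<Rightarrow> (nat \<Rightarrow> 'v \<Rightarrow> real) \<Rightarrow> real" where
  "relax_energy V w n C Sl Su \<gamma> u =
     (\<Sum>i\<in>{1..n}. \<Sum>x\<in>V. C i x * u i x) + (\<Sum>i\<in>{1..n}. TV_w V w (u i)) +
     (if 0 < \<gamma> \<and> \<gamma> < \<infinity> then (\<Sum>i\<in>{1..n}. P_pen (real_of_ereal \<gamma>) Sl Su i (unorm V (u i))) else 0)"

definition relax_feasible ::
  "'v set \<Rightarrow> nat \<Rightarrow> (nat \<Rightarrow> nat) \<Rightarrow> (nat \<Rightarrow> nat) \<Rightarrow> ereal \<Rightarrow> (nat \<Rightarrow> 'v \<Rightarrow> real) set" where
  "relax_feasible V n Sl Su \<gamma> =
     {u \<in> Bprime V n. \<gamma> = \<infinity> \<longrightarrow>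
        (\<forall>i\<in>{1..n}. real (Sl i) \<le> unorm V (u i) \<and> unorm V (u i) \<le> real (Su i))}"

definition relax_value ::
  "'v set \<Rightarrow> ('v \<Rightarrow> 'v \<Rightarrow> real) \<Rightarrow> nat \<Rightarrow> (nat \<Rightarrow> 'v \<Rightarrow> real) \<Rightarrow> (nat \<Rightarrow> nat) \<Rightarrow> (nat \<Rightarrow> nat)
   \<Rightarrow> ereal \<Rightarrow> ereal" where
  "relax_value V w n C Sl Su \<gamma> =
     (INF u\<in>relax_feasible V n Sl Su \<gamma>. ereal (relax_energy V w n C Sl Su \<gamma> u))"

end

theory Submission
  imports Defs
begin

text \<open>For fixed \<open>u\<close> the inner supremum of the primal--dual problem is the Lagrangian dual of the
  max-flow linear program. Maximising separately in \<open>p\<^sub>i\<close>, \<open>q\<^sub>i\<close> and \<open>\<rho>\<^sub>i\<close> yields the data term,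
  the total variation and the size penalty of the relaxed energy when \<open>u\<close> is feasible for the
  relaxation, while a violated constraint lets one dual variable grow without bound; so the
  primal--dual and the relaxed problems have the same value. The relaxed energy is continuous and,
  after truncation outside \<open>{1..n} \<times> V\<close>, its feasible set is compact and nonempty, so the minimum
  is attained and the common value is finite. Weak duality bounds the max-flow value by it; the
  converse is strong duality of linear programming, derived from Farkas' lemma, which in turn is
  proved by Fourier--Motzkin elimination.\<close>

section \<open>Farkas' lemma by Fourier--Motzkin elimination\<close>

definition lin_system_feasible :: "'x set \<Rightarrow> 'k set \<Rightarrow> ('k \<Rightarrow> 'x \<Rightarrow> real) \<Rightarrow> ('k \<Rightarrow> real) \<Rightarrow> bool" where
  "lin_system_feasible X K a b \<longleftrightarrow> (\<exists>z. \<forall>k\<in>K. (\<Sum>t\<in>X. a k t * z t) \<le> b k)"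

definition farkas_certificate ::
  "'x set \<Rightarrow> 'k set \<Rightarrow> ('k \<Rightarrow> 'x \<Rightarrow> real) \<Rightarrow> ('k \<Rightarrow> real) \<Rightarrow> ('k \<Rightarrow> real) \<Rightarrow> bool" where
  "farkas_certificate X K a b l \<longleftrightarrow>
     (\<forall>k\<in>K. 0 \<le> l k) \<and> (\<forall>t\<in>X. (\<Sum>k\<in>K. l k * a k t) = 0) \<and> (\<Sum>k\<in>K. l k * b k) < 0"

lemma farkas_reindex:
  assumes inv: "\<And>k. k \<in> K \<Longrightarrow> g (h k) = k"
    and farkas_image: "\<not> lin_system_feasible X (h ` K) (\<lambda>j. a (g j)) (\<lambda>j. b (g j)) \<Longrightarrow>
      \<exists>l. farkas_certificate X (h ` K) (\<lambda>j. a (g j)) (\<lambda>j. b (g j)) l"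
    and "\<not> lin_system_feasible X K a b"
  shows "\<exists>l. farkas_certificate X K a b l"
proof -
  have "\<not> lin_system_feasible X (h ` K) (\<lambda>j. a (g j)) (\<lambda>j. b (g j))"
    using assms(3) inv by (simp add: lin_system_feasible_def)
  then obtain l where l: "farkas_certificate X (h ` K) (\<lambda>j. a (g j)) (\<lambda>j. b (g j)) l"
    using farkas_image by blast
  have "inj_on h K" using inv by (metis inj_on_inverseI)
  then have "(\<Sum>j\<in>h ` K. l j * c (g j)) = (\<Sum>k\<in>K. l (h k) * c k)" for c
    using inv by (simp add: sum.reindex)
  from this[of "\<lambda>k. a k _"] this[of b] have "farkas_certificate X K a b (\<lambda>k. l (h k))"
    using l by (simp add: farkas_certificate_def)
  then show ?thesis by blast
qed

lemma exists_between_finite: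
  fixes f g :: "'a \<Rightarrow> real"
  assumes "finite A" "finite B" "\<And>a b. a \<in> A \<Longrightarrow> b \<in> B \<Longrightarrow> f a \<le> g b"
  shows "\<exists>v. (\<forall>a\<in>A. f a \<le> v) \<and> (\<forall>b\<in>B. v \<le> g b)"
proof (cases "A = {}")
  case True
  then show ?thesis using assms(2) by (intro exI[of _ "if B = {} then 0 else Min (g ` B)"]) auto
next
  case False
  then show ?thesis using assms by (intro exI[of _ "Max (f ` A)"]) (auto simp: Max_le_iff)
qed

text \<open>Eliminating the variable \<open>s\<close> keeps the constraints not involving \<open>s\<close> and replaces each pair of
  constraints in which \<open>s\<close> has opposite signs by the positive combination that cancels \<open>s\<close>;
  \<open>fm_lift\<close> transports multipliers of the new system back to the old one.\<close>

definition fm_index :: "('k \<Rightarrow> 'x \<Rightarrow> real) \<Rightarrow> 'x \<Rightarrow> 'k set \<Rightarrow> ('k + 'k \<times> 'k) set" where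
  "fm_index a s K = Inl ` {k\<in>K. a k s = 0} \<union> Inr ` ({p\<in>K. 0 < a p s} \<times> {m\<in>K. a m s < 0})"

definition fm_combine :: "('k \<Rightarrow> 'x \<Rightarrow> real) \<Rightarrow> 'x \<Rightarrow> ('k \<Rightarrow> real) \<Rightarrow> 'k + 'k \<times> 'k \<Rightarrow> real" where
  "fm_combine a s c j = (case j of Inl k \<Rightarrow> c k | Inr (p, m) \<Rightarrow> - a m s * c p + a p s * c m)"

definition fm_lift :: "('k \<Rightarrow> 'x \<Rightarrow> real) \<Rightarrow> 'x \<Rightarrow> 'k set \<Rightarrow> ('k + 'k \<times> 'k \<Rightarrow> real) \<Rightarrow> 'k \<Rightarrow> real" where
  "fm_lift a s K l k =
     (if a k s = 0 then l (Inl k)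
      else if 0 < a k s then (\<Sum>m\<in>{m\<in>K. a m s < 0}. l (Inr (k, m)) * - a m s)
      else (\<Sum>p\<in>{p\<in>K. 0 < a p s}. l (Inr (p, k)) * a p s))"

lemma fm_eliminate_feasible:
  assumes "finite X" "s \<notin> X" "finite K"
    and "lin_system_feasible X (fm_index a s K) (\<lambda>j t. fm_combine a s (\<lambda>k. a k t) j) (fm_combine a s b)"
  shows "lin_system_feasible (insert s X) K a b"
proof -
  obtain z where z: "\<And>j. j \<in> fm_index a s K \<Longrightarrow> (\<Sum>t\<in>X. fm_combine a s (\<lambda>k. a k t) j * z t) \<le> fm_combine a s b j"
    using assms(4) by (auto simp: lin_system_feasible_def)
  define R where "R k = (\<Sum>t\<in>X. a k t * z t)" for k
  have combine_R: "(\<Sum>t\<in>X. fm_combine a s (\<lambda>k. a k t) j * z t) = fm_combine a s R j" for j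
  proof (cases j)
    case (Inr pm)
    then show ?thesis
      by (cases pm) (simp add: fm_combine_def R_def sum.distrib sum_distrib_left sum_subtractf sum_negf ring_distribs mult.assoc)
  qed (simp add: fm_combine_def R_def)
  have zero: "R k \<le> b k" if "k \<in> K" "a k s = 0" for k
    using z[of "Inl k", unfolded combine_R] that by (simp add: fm_index_def fm_combine_def)
  have pair: "(b m - R m) / a m s \<le> (b p - R p) / a p s"
    if "p \<in> K" "0 < a p s" "m \<in> K" "a m s < 0" for p m
  proof -
    have "- a m s * R p + a p s * R m \<le> - a m s * b p + a p s * b m"
      using z[of "Inr (p, m)", unfolded combine_R] that by (simp add: fm_index_def fm_combine_def)
    then show ?thesis using that by (simp add: field_simps)
  qed
  obtain v where
    lower: "\<forall>m\<in>{m\<in>K. a m s < 0}. (b m - R m) / a m s \<le> v" and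
    upper: "\<forall>p\<in>{p\<in>K. 0 < a p s}. v \<le> (b p - R p) / a p s"
    using exists_between_finite[of "{m\<in>K. a m s < 0}" "{p\<in>K. 0 < a p s}"
        "\<lambda>m. (b m - R m) / a m s" "\<lambda>p. (b p - R p) / a p s"] assms(3) pair by auto
  have "a k s * v + R k \<le> b k" if "k \<in> K" for k
  proof (cases "a k s" "0::real" rule: linorder_cases)
    case less
    then show ?thesis using lower that by (simp add: field_simps)
  next
    case greater
    then show ?thesis using upper that by (simp add: field_simps)
  qed (use zero that in simp)
  moreover have "(\<Sum>t\<in>insert s X. a k t * (z(s := v)) t) = a k s * v + R k" for k
    using assms(1,2) by (auto simp: R_def intro!: sum.cong)
  ultimately show ?thesis unfolding lin_system_feasible_def by (intro exI[of _ "z(s := v)"]) simp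
qed

lemma sum_fm_lift:
  assumes "finite K"
  shows "(\<Sum>k\<in>K. fm_lift a s K l k * c k) = (\<Sum>j\<in>fm_index a s K. l j * fm_combine a s c j)"
proof -
  define K0 Kp Km where "K0 = {k\<in>K. a k s = 0}" and "Kp = {p\<in>K. 0 < a p s}" and "Km = {m\<in>K. a m s < 0}"
  have fin: "finite K0" "finite Kp" "finite Km" using assms by (auto simp: K0_def Kp_def Km_def)
  have "(\<Sum>j\<in>fm_index a s K. l j * fm_combine a s c j)
      = (\<Sum>k\<in>K0. l (Inl k) * c k) + (\<Sum>(p, m)\<in>Kp \<times> Km. l (Inr (p, m)) * (- a m s * c p + a p s * c m))"
    unfolding fm_index_def K0_def[symmetric] Kp_def[symmetric] Km_def[symmetric] using fin
    by (subst sum.union_disjoint) (auto simp: sum.reindex fm_combine_def case_prod_unfold)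
  also have "(\<Sum>(p, m)\<in>Kp \<times> Km. l (Inr (p, m)) * (- a m s * c p + a p s * c m))
      = (\<Sum>p\<in>Kp. \<Sum>m\<in>Km. l (Inr (p, m)) * - a m s * c p) + (\<Sum>p\<in>Kp. \<Sum>m\<in>Km. l (Inr (p, m)) * a p s * c m)"
    by (simp add: sum.cartesian_product[symmetric] sum.distrib[symmetric] ring_distribs mult.assoc)
  also have "\<dots> = (\<Sum>p\<in>Kp. (\<Sum>m\<in>Km. l (Inr (p, m)) * - a m s) * c p)
      + (\<Sum>m\<in>Km. (\<Sum>p\<in>Kp. l (Inr (p, m)) * a p s) * c m)"
    by (simp add: sum_distrib_right sum.swap[of _ Kp])
  also have "(\<Sum>k\<in>K0. l (Inl k) * c k) = (\<Sum>k\<in>K0. fm_lift a s K l k * c k)"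
    by (rule sum.cong) (auto simp: K0_def fm_lift_def)
  also have "(\<Sum>p\<in>Kp. (\<Sum>m\<in>Km. l (Inr (p, m)) * - a m s) * c p) = (\<Sum>k\<in>Kp. fm_lift a s K l k * c k)"
    by (rule sum.cong) (auto simp: Kp_def Km_def fm_lift_def)
  also have "(\<Sum>m\<in>Km. (\<Sum>p\<in>Kp. l (Inr (p, m)) * a p s) * c m) = (\<Sum>k\<in>Km. fm_lift a s K l k * c k)"
    by (rule sum.cong) (auto simp: Kp_def Km_def fm_lift_def)
  also have "(\<Sum>k\<in>K0. fm_lift a s K l k * c k) + ((\<Sum>k\<in>Kp. fm_lift a s K l k * c k)
      + (\<Sum>k\<in>Km. fm_lift a s K l k * c k)) = (\<Sum>k\<in>K. fm_lift a s K l k * c k)"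
  proof -
    have "K = K0 \<union> Kp \<union> Km" "K0 \<inter> Kp = {}" "(K0 \<union> Kp) \<inter> Km = {}"
      by (auto simp: K0_def Kp_def Km_def)
    then show ?thesis using fin by (simp add: sum.union_disjoint)
  qed
  finally show ?thesis ..
qed

lemma fm_lift_certificate:
  assumes "finite K" "farkas_certificate X (fm_index a s K) (\<lambda>j t. fm_combine a s (\<lambda>k. a k t) j) (fm_combine a s b) l"
  shows "farkas_certificate (insert s X) K a b (fm_lift a s K l)"
proof -
  have "fm_combine a s (\<lambda>k. a k s) j = 0" if "j \<in> fm_index a s K" for j
    using that by (auto simp: fm_index_def fm_combine_def)
  moreover have "0 \<le> fm_lift a s K l k" if "k \<in> K" for k
    using assms(2) that
    by (auto simp: farkas_certificate_def fm_lift_def fm_index_def intro!: sum_nonneg mult_nonneg_nonneg mult_nonneg_nonpos)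
  ultimately show ?thesis
    using assms by (simp add: farkas_certificate_def sum_fm_lift)
qed

lemma farkas_nat:
  fixes K :: "nat set"
  assumes "finite X" "finite K" "\<not> lin_system_feasible X K a b"
  shows "\<exists>l. farkas_certificate X K a b l"
  using assms
proof (induction X arbitrary: K a b rule: finite_induct)
  case (empty K a b)
  then obtain k where k: "k \<in> K" "b k < 0" by (force simp: lin_system_feasible_def not_le)
  then have "farkas_certificate {} K a b (\<lambda>j. of_bool (j = k))"
    using empty.prems(1) by (simp add: farkas_certificate_def)
  then show ?case by blast
next
  case (insert s X K a b)
  \<comment> \<open>The eliminated system is indexed by \<open>nat + nat \<times> nat\<close>; \<open>to_nat\<close> reindexes it by \<open>nat\<close>
    so that the induction hypothesis applies.\<close>
  define F A B where "F = fm_index a s K" and "A j t = fm_combine a s (\<lambda>k. a k t) j"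
    and "B = fm_combine a s b" for j t
  have "finite (to_nat ` F)" using insert.prems(1) by (simp add: F_def fm_index_def)
  then have "\<exists>l. farkas_certificate X F A B l"
  proof (rule farkas_reindex[of F from_nat to_nat X A B, OF from_nat_to_nat insert.IH])
    show "\<not> lin_system_feasible X F A B"
      using fm_eliminate_feasible[OF insert.hyps insert.prems(1), where a = a and b = b] insert.prems(2)
      unfolding F_def A_def[abs_def] B_def by blast
  qed
  then obtain l where "farkas_certificate X F A B l" ..
  then have "farkas_certificate (insert s X) K a b (fm_lift a s K l)"
    unfolding F_def A_def[abs_def] B_def by (rule fm_lift_certificate[OF insert.prems(1)])
  then show ?case by blast
qed

theorem farkas:
  fixes a :: "'k \<Rightarrow> 'x \<Rightarrow> real"
  assumes "finite X" "finite K" "\<not> lin_system_feasible X K a b"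
  shows "\<exists>l. farkas_certificate X K a b l"
proof -
  obtain h :: "'k \<Rightarrow> nat" where "inj_on h K" using finite_imp_inj_to_nat_seg[OF assms(2)] by blast
  then show ?thesis
    using farkas_reindex[of K "inv_into K h" h X a b] farkas_nat[OF assms(1)] assms(2,3) by simp
qed

section \<open>Lagrangian duality for finite linear programs\<close>

definition linear_form :: "'x set \<Rightarrow> (('x \<Rightarrow> real) \<Rightarrow> real) \<Rightarrow> bool" where
  "linear_form X L \<longleftrightarrow> (\<forall>z. L z = (\<Sum>t\<in>X. L (indicator {t}) * z t))"

lemma linear_formD: "linear_form X L \<Longrightarrow> L z = (\<Sum>t\<in>X. L (indicator {t}) * z t)"
  unfolding linear_form_def by blast

lemma linear_form_coordinate: "finite X \<Longrightarrow> t \<in> X \<Longrightarrow> linear_form X (\<lambda>z. z t)"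
  by (simp add: linear_form_def indicator_def)

lemma linear_form_add:
  assumes "linear_form X L" "linear_form X M"
  shows "linear_form X (\<lambda>z. L z + M z)"
  unfolding linear_form_def
proof
  fix z
  show "L z + M z = (\<Sum>t\<in>X. (L (indicator {t}) + M (indicator {t})) * z t)"
    using linear_formD[OF assms(1), of z] linear_formD[OF assms(2), of z]
    by (simp add: distrib_right sum.distrib)
qed

lemma linear_form_scale:
  assumes "linear_form X L"
  shows "linear_form X (\<lambda>z. c * L z)"
  unfolding linear_form_def
proof
  fix z
  show "c * L z = (\<Sum>t\<in>X. c * L (indicator {t}) * z t)"
    using linear_formD[OF assms, of z] by (simp add: sum_distrib_left mult.assoc)
qed

lemma linear_form_uminus: "linear_form X L \<Longrightarrow> linear_form X (\<lambda>z. - L z)"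
  using linear_form_scale[of X L "-1"] by simp

lemma linear_form_diff: "linear_form X L \<Longrightarrow> linear_form X M \<Longrightarrow> linear_form X (\<lambda>z. L z - M z)"
  using linear_form_add[of X L "\<lambda>z. - M z"] linear_form_uminus[of X M] by simp

lemma linear_form_scale_right: "linear_form X L \<Longrightarrow> linear_form X (\<lambda>z. L z * c)"
  using linear_form_scale[of X L c] by (simp add: mult.commute)

lemma linear_form_divide: "linear_form X L \<Longrightarrow> linear_form X (\<lambda>z. L z / c)"
  using linear_form_scale[of X L "1 / c"] by simp

lemma linear_form_sum:
  "finite F \<Longrightarrow> (\<And>i. i \<in> F \<Longrightarrow> linear_form X (L i)) \<Longrightarrow> linear_form X (\<lambda>z. \<Sum>i\<in>F. L i z)"
proof (induction F rule: finite_induct)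
  case empty
  then show ?case by (simp add: linear_form_def)
next
  case (insert i F)
  then show ?case using linear_form_add[of X "L i" "\<lambda>z. \<Sum>i\<in>F. L i z"] by simp
qed

lemmas linear_form_intros =
  linear_form_coordinate linear_form_add linear_form_diff linear_form_scale
  linear_form_scale_right linear_form_uminus linear_form_divide linear_form_sum

lemma farkas_linear_forms:
  assumes "finite X" "finite K" "\<And>k. k \<in> K \<Longrightarrow> linear_form X (A k)"
    and "\<not> (\<exists>z. \<forall>k\<in>K. A k z \<le> b k)"
  shows "\<exists>l. (\<forall>k\<in>K. 0 \<le> l k) \<and> (\<forall>z. (\<Sum>k\<in>K. l k * A k z) = 0) \<and> (\<Sum>k\<in>K. l k * b k) < 0"
proof -
  have "\<not> lin_system_feasible X K (\<lambda>k t. A k (indicator {t})) b"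
    using assms(4) by (simp add: lin_system_feasible_def linear_formD[OF assms(3), symmetric])
  then obtain l where l: "farkas_certificate X K (\<lambda>k t. A k (indicator {t})) b l"
    using farkas assms(1,2) by blast
  have "(\<Sum>k\<in>K. l k * A k z) = (\<Sum>t\<in>X. (\<Sum>k\<in>K. l k * A k (indicator {t})) * z t)" for z
  proof -
    have "(\<Sum>k\<in>K. l k * A k z) = (\<Sum>k\<in>K. \<Sum>t\<in>X. l k * A k (indicator {t}) * z t)"
      using assms(3) by (intro sum.cong refl) (simp add: linear_formD[of X "A _" z] sum_distrib_left mult.assoc)
    then show ?thesis by (simp add: sum_distrib_right sum.swap[of _ K])
  qed
  moreover have "(\<Sum>k\<in>K. l k * A k (indicator {t})) = 0" if "t \<in> X" for t
    using l that by (simp add: farkas_certificate_def)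
  ultimately have "(\<Sum>k\<in>K. l k * A k z) = 0" for z
    by (metis (no_types, lifting) mult_zero_left sum.neutral)
  then show ?thesis using l unfolding farkas_certificate_def by blast
qed

lemma farkas_with_equations:
  fixes A :: "'k \<Rightarrow> ('x \<Rightarrow> real) \<Rightarrow> real" and E :: "'j \<Rightarrow> ('x \<Rightarrow> real) \<Rightarrow> real"
  assumes fin: "finite X" "finite K" "finite J"
    and lin: "\<And>k. k \<in> K \<Longrightarrow> linear_form X (A k)" "\<And>j. j \<in> J \<Longrightarrow> linear_form X (E j)" "linear_form X c"
    and infeasible: "\<not> (\<exists>z. (\<forall>k\<in>K. A k z \<le> b k) \<and> (\<forall>j\<in>J. E j z = d j) \<and> v \<le> c z)"
  shows "\<exists>\<mu> l w. 0 \<le> \<mu> \<and> (\<forall>k\<in>K. 0 \<le> l k)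
    \<and> (\<forall>z. \<mu> * c z = (\<Sum>k\<in>K. l k * A k z) + (\<Sum>j\<in>J. w j * E j z))
    \<and> (\<Sum>k\<in>K. l k * b k) + (\<Sum>j\<in>J. w j * d j) < \<mu> * v"
proof -
  \<comment> \<open>\<open>None\<close> indexes the constraint \<open>- c z \<le> - v\<close>; each equation becomes two inequalities.\<close>
  define KK :: "('k + 'j \<times> bool) option set" where "KK = insert None (Some ` (Inl ` K \<union> Inr ` (J \<times> UNIV)))"
  define F where "F \<kappa> = (case \<kappa> of None \<Rightarrow> (\<lambda>z. - c z) | Some (Inl k) \<Rightarrow> A k
    | Some (Inr (j, True)) \<Rightarrow> E j | Some (Inr (j, False)) \<Rightarrow> (\<lambda>z. - E j z))" for \<kappa>
  define r where "r \<kappa> = (case \<kappa> of None \<Rightarrow> - v | Some (Inl k) \<Rightarrow> b k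
    | Some (Inr (j, True)) \<Rightarrow> d j | Some (Inr (j, False)) \<Rightarrow> - d j)" for \<kappa>
  have split: "(\<Sum>\<kappa>\<in>KK. g \<kappa>) = g None + (\<Sum>k\<in>K. g (Some (Inl k)))
      + (\<Sum>j\<in>J. g (Some (Inr (j, True))) + g (Some (Inr (j, False))))" for g :: "_ \<Rightarrow> real"
  proof -
    have "(\<Sum>\<kappa>\<in>KK. g \<kappa>) = g None + (\<Sum>x\<in>Inl ` K \<union> Inr ` (J \<times> UNIV). g (Some x))"
      unfolding KK_def using fin by (simp add: sum.reindex)
    also have "(\<Sum>x\<in>Inl ` K \<union> Inr ` (J \<times> UNIV). g (Some x))
        = (\<Sum>k\<in>K. g (Some (Inl k))) + (\<Sum>p\<in>J \<times> UNIV. g (Some (Inr p)))"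
      using fin by (subst sum.union_disjoint) (auto simp: sum.reindex)
    also have "(\<Sum>p\<in>J \<times> UNIV. g (Some (Inr p))) = (\<Sum>j\<in>J. g (Some (Inr (j, True))) + g (Some (Inr (j, False))))"
      by (simp add: sum.cartesian_product' UNIV_bool add.commute)
    finally show ?thesis by (simp add: add.assoc)
  qed
  have "\<not> (\<exists>z. \<forall>\<kappa>\<in>KK. F \<kappa> z \<le> r \<kappa>)"
  proof
    assume "\<exists>z. \<forall>\<kappa>\<in>KK. F \<kappa> z \<le> r \<kappa>"
    then obtain z where z: "\<forall>\<kappa>\<in>KK. F \<kappa> z \<le> r \<kappa>" ..
    have "A k z \<le> b k" if "k \<in> K" for k
      using z[rule_format, of "Some (Inl k)"] that by (simp add: KK_def F_def r_def)
    moreover have "E j z = d j" if "j \<in> J" for j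
      using z[rule_format, of "Some (Inr (j, True))"] z[rule_format, of "Some (Inr (j, False))"] that
      by (simp add: KK_def F_def r_def)
    moreover have "v \<le> c z" using z[rule_format, of None] by (simp add: KK_def F_def r_def)
    ultimately show False using infeasible by blast
  qed
  moreover have "linear_form X (F \<kappa>)" if "\<kappa> \<in> KK" for \<kappa>
    using that lin linear_form_uminus[OF lin(2)] linear_form_uminus[OF lin(3)]
    by (auto simp: KK_def F_def split: bool.split)
  ultimately obtain l where l: "\<forall>\<kappa>\<in>KK. 0 \<le> l \<kappa>" "\<And>z. (\<Sum>\<kappa>\<in>KK. l \<kappa> * F \<kappa> z) = 0" "(\<Sum>\<kappa>\<in>KK. l \<kappa> * r \<kappa>) < 0"
    using farkas_linear_forms[of X KK F r] fin by (auto simp: KK_def)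
  define w where "w j = l (Some (Inr (j, True))) - l (Some (Inr (j, False)))" for j
  show ?thesis
  proof (intro exI[of _ "l None"] exI[of _ "\<lambda>k. l (Some (Inl k))"] exI[of _ w] conjI allI ballI)
    show "0 \<le> l None" using l(1) by (simp add: KK_def)
    show "0 \<le> l (Some (Inl k))" if "k \<in> K" for k using l(1) that by (simp add: KK_def)
    show "l None * c z = (\<Sum>k\<in>K. l (Some (Inl k)) * A k z) + (\<Sum>j\<in>J. w j * E j z)" for z
      using l(2)[of z] by (simp add: split F_def w_def algebra_simps sum.distrib sum_subtractf)
    show "(\<Sum>k\<in>K. l (Some (Inl k)) * b k) + (\<Sum>j\<in>J. w j * d j) < l None * v"
      using l(3) by (simp add: split r_def w_def algebra_simps sum.distrib sum_subtractf)
  qed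
qed

lemma lagrange_duality:
  fixes A :: "'k \<Rightarrow> ('x \<Rightarrow> real) \<Rightarrow> real" and E :: "'j \<Rightarrow> ('x \<Rightarrow> real) \<Rightarrow> real"
  assumes fin: "finite X" "finite K" "finite J"
    and lin: "\<And>k. k \<in> K \<Longrightarrow> linear_form X (A k)" "\<And>j. j \<in> J \<Longrightarrow> linear_form X (E j)" "linear_form X c"
    and feasible: "\<exists>z. (\<forall>k\<in>K. A k z \<le> b k) \<and> (\<forall>j\<in>J. E j z = d j)"
    and bounded: "\<And>z. \<forall>k\<in>K. A k z \<le> b k \<Longrightarrow> \<forall>j\<in>J. E j z = d j \<Longrightarrow> c z < v"
  shows "\<exists>u B. B < v \<and> (\<forall>z. (\<forall>k\<in>K. A k z \<le> b k) \<longrightarrow> c z + (\<Sum>j\<in>J. u j * (E j z - d j)) \<le> B)"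
proof -
  have "\<not> (\<exists>z. (\<forall>k\<in>K. A k z \<le> b k) \<and> (\<forall>j\<in>J. E j z = d j) \<and> v \<le> c z)"
    using bounded by (meson not_le)
  then obtain \<mu> l w where "0 \<le> \<mu>" and l: "\<forall>k\<in>K. 0 \<le> l k"
    and identity: "\<And>z. \<mu> * c z = (\<Sum>k\<in>K. l k * A k z) + (\<Sum>j\<in>J. w j * E j z)"
    and R_less: "(\<Sum>k\<in>K. l k * b k) + (\<Sum>j\<in>J. w j * d j) < \<mu> * v"
    using farkas_with_equations[where A = A and E = E and c = c, OF fin lin] by blast
  define R where "R = (\<Sum>k\<in>K. l k * b k) + (\<Sum>j\<in>J. w j * d j)"
  have weighted: "(\<Sum>k\<in>K. l k * A k z) \<le> (\<Sum>k\<in>K. l k * b k)" if "\<forall>k\<in>K. A k z \<le> b k" for z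
    using that l by (intro sum_mono mult_left_mono) auto
  \<comment> \<open>Feasibility excludes \<open>\<mu> = 0\<close>, so the multipliers can be normalised.\<close>
  have "0 < \<mu>"
  proof (rule ccontr)
    assume "\<not> 0 < \<mu>"
    then have "\<mu> = 0" using \<open>0 \<le> \<mu>\<close> by simp
    obtain z where "\<forall>k\<in>K. A k z \<le> b k" "\<forall>j\<in>J. E j z = d j" using feasible by blast
    then show False using identity[of z] weighted[of z] R_less \<open>\<mu> = 0\<close> by simp
  qed
  show ?thesis
  proof (intro exI conjI allI impI)
    show "R / \<mu> < v" using R_less \<open>0 < \<mu>\<close> by (simp add: R_def pos_divide_less_eq mult.commute)
  next
    fix z assume z: "\<forall>k\<in>K. A k z \<le> b k"
    have "\<mu> * (c z + (\<Sum>j\<in>J. - w j / \<mu> * (E j z - d j)))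
        = \<mu> * c z - (\<Sum>j\<in>J. w j * E j z) + (\<Sum>j\<in>J. w j * d j)"
      using \<open>0 < \<mu>\<close> by (simp add: distrib_left sum_distrib_left sum_subtractf right_diff_distrib sum_negf)
    also have "\<dots> \<le> R" using identity[of z] weighted[OF z] by (simp add: R_def)
    finally show "c z + (\<Sum>j\<in>J. - w j / \<mu> * (E j z - d j)) \<le> R / \<mu>"
      using \<open>0 < \<mu>\<close> by (simp add: pos_le_divide_eq mult.commute)
  qed
qed

section \<open>The primal--dual problem is the relaxed problem\<close>

definition lagrangian ::
  "'v set \<Rightarrow> ('v \<Rightarrow> 'v \<Rightarrow> real) \<Rightarrow> nat \<Rightarrow> (nat \<Rightarrow> nat) \<Rightarrow> (nat \<Rightarrow> nat) \<Rightarrow> (nat \<Rightarrow> 'v \<Rightarrow> real) \<Rightarrow>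
   ('v \<Rightarrow> real) \<Rightarrow> (nat \<Rightarrow> 'v \<Rightarrow> real) \<Rightarrow> (nat \<Rightarrow> 'v \<Rightarrow> 'v \<Rightarrow> real) \<Rightarrow> (nat \<Rightarrow> real) \<Rightarrow> (nat \<Rightarrow> real) \<Rightarrow> real" where
  "lagrangian V w n Sl Su u ps p q r1 r2 = flow_obj V n Sl Su ps r1 r2 +
     (\<Sum>i\<in>{1..n}. \<Sum>x\<in>V. u i x * (div_w V w (q i) x - ps x + p i x + r2 i - r1 i))"

lemma pd_inner_eq_Sup_lagrangian:
  "pd_inner V w n C Sl Su \<gamma> u =
     Sup {ereal (lagrangian V w n Sl Su u ps p q r1 r2) | ps p q r1 r2. dual_box V w n C \<gamma> p q r1 r2}"
  by (simp add: pd_inner_def lagrangian_def)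

lemma lagrangian_le_pd_inner:
  "dual_box V w n C \<gamma> p q r1 r2 \<Longrightarrow> ereal (lagrangian V w n Sl Su u ps p q r1 r2) \<le> pd_inner V w n C Sl Su \<gamma> u"
  unfolding pd_inner_eq_Sup_lagrangian by (rule Sup_upper) blast

lemma pd_inner_le:
  assumes "\<And>ps p q r1 r2. dual_box V w n C \<gamma> p q r1 r2 \<Longrightarrow> lagrangian V w n Sl Su u ps p q r1 r2 \<le> B"
  shows "pd_inner V w n C Sl Su \<gamma> u \<le> ereal B"
  unfolding pd_inner_eq_Sup_lagrangian using assms by (intro Sup_least) auto

lemma maxflow_value_le_pd_inner: "maxflow_value V w n C Sl Su \<gamma> \<le> pd_inner V w n C Sl Su \<gamma> u"
  unfolding maxflow_value_def
proof (rule Sup_least, clarify)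
  fix ps p q r1 r2
  assume box: "dual_box V w n C \<gamma> p q r1 r2"
    and flow: "\<forall>i\<in>{1..n}. \<forall>x\<in>V. div_w V w (q i) x - ps x + p i x = r1 i - r2 i"
  then have "lagrangian V w n Sl Su u ps p q r1 r2 = flow_obj V n Sl Su ps r1 r2"
    by (simp add: lagrangian_def algebra_simps)
  then show "ereal (flow_obj V n Sl Su ps r1 r2) \<le> pd_inner V w n C Sl Su \<gamma> u"
    using lagrangian_le_pd_inner[OF box] by metis
qed

lemma maxflow_value_le_pd_value: "maxflow_value V w n C Sl Su \<gamma> \<le> pd_value V w n C Sl Su \<gamma>"
  unfolding pd_value_def by (rule INF_greatest) (rule maxflow_value_le_pd_inner)

lemma sum_mult_div_w:
  fixes u :: "'v \<Rightarrow> real"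
  assumes "\<And>x y. w x y = w y x"
  shows "(\<Sum>x\<in>V. u x * div_w V w \<phi> x) = (1/2) * (\<Sum>x\<in>V. \<Sum>y\<in>V. w x y * \<phi> x y * (u x - u y))"
proof -
  have "(\<Sum>x\<in>V. u x * div_w V w \<phi> x)
      = (1/2) * ((\<Sum>x\<in>V. \<Sum>y\<in>V. u x * w x y * \<phi> x y) - (\<Sum>x\<in>V. \<Sum>y\<in>V. u x * w x y * \<phi> y x))"
    by (simp add: div_w_def sum_distrib_left sum_subtractf algebra_simps)
  also have "(\<Sum>x\<in>V. \<Sum>y\<in>V. u x * w x y * \<phi> y x) = (\<Sum>x\<in>V. \<Sum>y\<in>V. u y * w x y * \<phi> x y)"
    using assms by (subst sum.swap) (simp add: mult.commute)
  finally show ?thesis by (simp add: algebra_simps sum_subtractf)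
qed

lemma lagrangian_regrouped:
  assumes "\<And>x y. w x y = w y x"
  shows "lagrangian V w n Sl Su u ps p q r1 r2 =
       (\<Sum>x\<in>V. ps x * (1 - (\<Sum>i\<in>{1..n}. u i x)))
     + (\<Sum>i\<in>{1..n}. \<Sum>x\<in>V. u i x * p i x)
     + (\<Sum>i\<in>{1..n}. (1/2) * (\<Sum>x\<in>V. \<Sum>y\<in>V. w x y * q i x y * (u i x - u i y)))
     + (\<Sum>i\<in>{1..n}. r1 i * (real (Sl i) - unorm V (u i)) + r2 i * (unorm V (u i) - real (Su i)))"
proof -
  have inner: "(\<Sum>x\<in>V. u i x * (div_w V w (q i) x - ps x + p i x + r2 i - r1 i)) =
     (1/2) * (\<Sum>x\<in>V. \<Sum>y\<in>V. w x y * q i x y * (u i x - u i y)) - (\<Sum>x\<in>V. ps x * u i x)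
     + (\<Sum>x\<in>V. u i x * p i x) + (r2 i - r1 i) * unorm V (u i)" for i
    using sum_mult_div_w[where w = w and u = "u i" and V = V and \<phi> = "q i", OF assms]
    by (simp add: unorm_def algebra_simps sum.distrib sum_subtractf sum_distrib_left)
  have swap: "(\<Sum>i\<in>{1..n}. \<Sum>x\<in>V. ps x * u i x) = (\<Sum>x\<in>V. ps x * (\<Sum>i\<in>{1..n}. u i x))"
    by (subst sum.swap) (simp add: sum_distrib_left)
  show ?thesis
    unfolding lagrangian_def flow_obj_def inner using swap
    by (simp add: sum.distrib sum_subtractf right_diff_distrib algebra_simps)
qed

lemma relax_feasible_iff:
  "u \<in> relax_feasible V n Sl Su \<gamma> \<longleftrightarrow>
     (\<forall>x\<in>V. (\<Sum>i\<in>{1..n}. u i x) = 1) \<and> (\<forall>i\<in>{1..n}. \<forall>x\<in>V. 0 \<le> u i x) \<and>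
     (\<gamma> = \<infinity> \<longrightarrow> (\<forall>i\<in>{1..n}. real (Sl i) \<le> unorm V (u i) \<and> unorm V (u i) \<le> real (Su i)))"
proof -
  have "u i x \<le> 1" if "\<forall>i\<in>{1..n}. 0 \<le> u i x" "(\<Sum>i\<in>{1..n}. u i x) = 1" "i \<in> {1..n}" for i x
    using member_le_sum[of i "{1..n}" "\<lambda>i. u i x"] that by simp
  then show ?thesis by (auto simp: relax_feasible_def Bprime_def)
qed

lemma flow_term_le_TV_w:
  assumes "\<And>x y. 0 \<le> w x y" "\<And>x y. x \<in> V \<Longrightarrow> y \<in> V \<Longrightarrow> 0 < w x y \<Longrightarrow> \<bar>q x y\<bar> \<le> 1"
  shows "(1/2) * (\<Sum>x\<in>V. \<Sum>y\<in>V. w x y * q x y * (v x - v y)) \<le> TV_w V w v"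
  unfolding TV_w_def
proof (intro mult_left_mono sum_mono)
  fix x y assume "x \<in> V" "y \<in> V"
  have "q x y * (v x - v y) \<le> \<bar>v y - v x\<bar>" if "0 < w x y"
  proof -
    have "q x y * (v x - v y) \<le> \<bar>q x y\<bar> * \<bar>v x - v y\<bar>" by (metis abs_ge_self abs_mult)
    also have "\<dots> \<le> \<bar>v y - v x\<bar>"
      using assms(2)[OF \<open>x \<in> V\<close> \<open>y \<in> V\<close> that] by (simp add: abs_minus_commute mult_left_le_one_le)
    finally show ?thesis .
  qed
  then show "w x y * q x y * (v x - v y) \<le> w x y * \<bar>v y - v x\<bar>"
    using assms(1)[of x y] by (cases "w x y = 0") (auto simp: mult.assoc intro: mult_left_mono)
qed simp

lemma sgn_mult_self: "sgn x * x = \<bar>x :: real\<bar>"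
  by (simp add: sgn_if)

lemma sgn_flow_term_eq_TV_w:
  "(1/2) * (\<Sum>x\<in>V. \<Sum>y\<in>V. w x y * sgn (v x - v y) * (v x - v y)) = TV_w V w v"
  unfolding TV_w_def by (simp add: mult.assoc abs_minus_commute sgn_mult_self)

definition size_penalty :: "ereal \<Rightarrow> (nat \<Rightarrow> nat) \<Rightarrow> (nat \<Rightarrow> nat) \<Rightarrow> nat \<Rightarrow> real \<Rightarrow> real" where
  "size_penalty \<gamma> Sl Su i t = (if 0 < \<gamma> \<and> \<gamma> < \<infinity> then P_pen (real_of_ereal \<gamma>) Sl Su i t else 0)"

lemma size_term_le_P_pen:
  assumes "0 \<le> r1" "r1 \<le> g" "0 \<le> r2" "r2 \<le> g" "Sl i \<le> Su i"
  shows "r1 * (real (Sl i) - t) + r2 * (t - real (Su i)) \<le> P_pen g Sl Su i t"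
proof -
  consider "t < real (Sl i)" | "real (Sl i) \<le> t \<and> t \<le> real (Su i)" | "real (Su i) < t" by linarith
  then show ?thesis
  proof cases
    case 1
    then have "r1 * (real (Sl i) - t) \<le> g * (real (Sl i) - t)" "r2 * (t - real (Su i)) \<le> 0"
      using assms by (auto intro: mult_right_mono mult_nonneg_nonpos)
    moreover have "P_pen g Sl Su i t = g * (real (Sl i) - t)" using 1 assms(5) by (simp add: P_pen_def)
    ultimately show ?thesis by linarith
  next
    case 2
    then have "r1 * (real (Sl i) - t) \<le> 0" "r2 * (t - real (Su i)) \<le> 0"
      using assms by (auto intro: mult_nonneg_nonpos)
    then show ?thesis using 2 by (simp add: P_pen_def)
  next
    case 3
    then have "r1 * (real (Sl i) - t) \<le> 0" "r2 * (t - real (Su i)) \<le> g * (t - real (Su i))"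
      using assms by (auto intro: mult_right_mono mult_nonneg_nonpos)
    moreover have "P_pen g Sl Su i t = g * (t - real (Su i))" using 3 by (simp add: P_pen_def)
    ultimately show ?thesis by linarith
  qed
qed

lemma size_term_le_size_penalty:
  assumes "0 \<le> r1" "0 \<le> r2" "ereal r1 \<le> \<gamma>" "ereal r2 \<le> \<gamma>" "Sl i \<le> Su i"
    and "\<gamma> = \<infinity> \<Longrightarrow> real (Sl i) \<le> t \<and> t \<le> real (Su i)"
  shows "r1 * (real (Sl i) - t) + r2 * (t - real (Su i)) \<le> size_penalty \<gamma> Sl Su i t"
proof (cases \<gamma>)
  case (real g)
  then have "r1 \<le> g" "r2 \<le> g" using assms(3,4) by auto
  show ?thesis
  proof (cases "0 < g")
    case True
    then show ?thesis using size_term_le_P_pen[of r1 g r2 Sl i Su t] assms \<open>r1 \<le> g\<close> \<open>r2 \<le> g\<close> real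
      by (simp add: size_penalty_def)
  next
    case False
    then have "r1 = 0" "r2 = 0" using assms(1,2) \<open>r1 \<le> g\<close> \<open>r2 \<le> g\<close> by auto
    then show ?thesis using False real by (simp add: size_penalty_def)
  qed
next
  case PInf
  then show ?thesis using assms by (auto simp: size_penalty_def intro!: add_nonpos_nonpos mult_nonneg_nonpos)
qed (use assms in simp)

lemma size_penalty_attained:
  assumes "0 \<le> \<gamma>" "Sl i \<le> Su i"
    and "r1 = (if 0 < \<gamma> \<and> \<gamma> < \<infinity> \<and> t < real (Sl i) then real_of_ereal \<gamma> else 0)"
    and "r2 = (if 0 < \<gamma> \<and> \<gamma> < \<infinity> \<and> real (Su i) < t then real_of_ereal \<gamma> else 0)"
  shows "0 \<le> r1" "0 \<le> r2" "ereal r1 \<le> \<gamma>" "ereal r2 \<le> \<gamma>"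
    and "r1 * (real (Sl i) - t) + r2 * (t - real (Su i)) = size_penalty \<gamma> Sl Su i t"
  using assms by (cases \<gamma>; auto simp: size_penalty_def P_pen_def)+

lemma relax_energy_eq:
  "relax_energy V w n C Sl Su \<gamma> u = (\<Sum>i\<in>{1..n}. \<Sum>x\<in>V. C i x * u i x) + (\<Sum>i\<in>{1..n}. TV_w V w (u i))
     + (\<Sum>i\<in>{1..n}. size_penalty \<gamma> Sl Su i (unorm V (u i)))"
  by (cases "0 < \<gamma> \<and> \<gamma> < \<infinity>") (auto simp: relax_energy_def size_penalty_def)

lemma lagrangian_le_relax_energy:
  assumes "\<And>x y. w x y = w y x" "\<And>x y. 0 \<le> w x y" "\<And>i. i \<in> {1..n} \<Longrightarrow> Sl i \<le> Su i"
    and "u \<in> relax_feasible V n Sl Su \<gamma>" "dual_box V w n C \<gamma> p q r1 r2"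
  shows "lagrangian V w n Sl Su u ps p q r1 r2 \<le> relax_energy V w n C Sl Su \<gamma> u"
proof -
  have "(\<Sum>x\<in>V. ps x * (1 - (\<Sum>i\<in>{1..n}. u i x))) = 0"
    using assms(4) by (simp add: relax_feasible_iff)
  moreover have "(\<Sum>i\<in>{1..n}. \<Sum>x\<in>V. u i x * p i x) \<le> (\<Sum>i\<in>{1..n}. \<Sum>x\<in>V. C i x * u i x)"
    using assms(4,5) by (intro sum_mono)
      (auto simp: dual_box_def relax_feasible_iff mult.commute[of "u _ _"] intro!: mult_right_mono)
  moreover have "(\<Sum>i\<in>{1..n}. (1/2) * (\<Sum>x\<in>V. \<Sum>y\<in>V. w x y * q i x y * (u i x - u i y)))
      \<le> (\<Sum>i\<in>{1..n}. TV_w V w (u i))"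
    using assms(2,5) by (intro sum_mono flow_term_le_TV_w) (auto simp: dual_box_def)
  moreover have "(\<Sum>i\<in>{1..n}. r1 i * (real (Sl i) - unorm V (u i)) + r2 i * (unorm V (u i) - real (Su i)))
      \<le> (\<Sum>i\<in>{1..n}. size_penalty \<gamma> Sl Su i (unorm V (u i)))"
    using assms(3-5) by (intro sum_mono size_term_le_size_penalty) (auto simp: dual_box_def relax_feasible_iff)
  ultimately show ?thesis
    unfolding lagrangian_regrouped[OF assms(1)] relax_energy_eq by linarith
qed

lemma relax_energy_le_pd_inner:
  assumes "\<And>x y. w x y = w y x" "\<And>i. i \<in> {1..n} \<Longrightarrow> Sl i \<le> Su i" "0 \<le> \<gamma>"
  shows "ereal (relax_energy V w n C Sl Su \<gamma> u) \<le> pd_inner V w n C Sl Su \<gamma> u"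
proof -
  define r1 where "r1 i = (if 0 < \<gamma> \<and> \<gamma> < \<infinity> \<and> unorm V (u i) < real (Sl i) then real_of_ereal \<gamma> else 0)" for i
  define r2 where "r2 i = (if 0 < \<gamma> \<and> \<gamma> < \<infinity> \<and> real (Su i) < unorm V (u i) then real_of_ereal \<gamma> else 0)" for i
  have optimal: "0 \<le> r1 i \<and> 0 \<le> r2 i \<and> ereal (r1 i) \<le> \<gamma> \<and> ereal (r2 i) \<le> \<gamma> \<and>
      r1 i * (real (Sl i) - unorm V (u i)) + r2 i * (unorm V (u i) - real (Su i))
        = size_penalty \<gamma> Sl Su i (unorm V (u i))" if "i \<in> {1..n}" for i
    using size_penalty_attained[where Sl = Sl and Su = Su and i = i and t = "unorm V (u i)",
        OF assms(3) assms(2)[OF that] r1_def[of i] r2_def[of i]] by blast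
  have box: "dual_box V w n C \<gamma> C (\<lambda>i x y. sgn (u i x - u i y)) r1 r2"
    unfolding dual_box_def using optimal by (simp add: abs_sgn_eq)
  have "(\<Sum>i\<in>{1..n}. r1 i * (real (Sl i) - unorm V (u i)) + r2 i * (unorm V (u i) - real (Su i)))
      = (\<Sum>i\<in>{1..n}. size_penalty \<gamma> Sl Su i (unorm V (u i)))"
    using optimal by (intro sum.cong) auto
  then have "lagrangian V w n Sl Su u (\<lambda>x. 0) C (\<lambda>i x y. sgn (u i x - u i y)) r1 r2
      = relax_energy V w n C Sl Su \<gamma> u"
    unfolding lagrangian_regrouped[OF assms(1)] relax_energy_eq sgn_flow_term_eq_TV_w
    by (simp add: mult.commute)
  then show ?thesis
    using lagrangian_le_pd_inner[OF box, of Sl Su u "\<lambda>x. 0"] by simp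
qed

lemma pd_inner_feasible:
  assumes "\<And>x y. w x y = w y x" "\<And>x y. 0 \<le> w x y" "\<And>i. i \<in> {1..n} \<Longrightarrow> Sl i \<le> Su i"
    and "0 \<le> \<gamma>" "u \<in> relax_feasible V n Sl Su \<gamma>"
  shows "pd_inner V w n C Sl Su \<gamma> u = ereal (relax_energy V w n C Sl Su \<gamma> u)"
proof (rule antisym)
  show "pd_inner V w n C Sl Su \<gamma> u \<le> ereal (relax_energy V w n C Sl Su \<gamma> u)"
    using assms(1-3,5) by (intro pd_inner_le lagrangian_le_relax_energy)
  show "ereal (relax_energy V w n C Sl Su \<gamma> u) \<le> pd_inner V w n C Sl Su \<gamma> u"
    using assms(1,3,4) by (rule relax_energy_le_pd_inner)
qed

lemma pd_inner_eq_infinity: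
  assumes "\<And>t. 0 \<le> t \<Longrightarrow> dual_box V w n C \<gamma> (p t) (q t) (r1 t) (r2 t)"
    and "\<And>t. lagrangian V w n Sl Su u (ps t) (p t) (q t) (r1 t) (r2 t) = L + t * \<sigma>"
    and "0 < \<sigma>"
  shows "pd_inner V w n C Sl Su \<gamma> u = \<infinity>"
proof (rule ereal_top)
  fix M
  define t where "t = max 0 ((M - L) / \<sigma>)"
  have "M \<le> L + t * \<sigma>" using assms(3) by (simp add: t_def max_def field_simps)
  then have "ereal M \<le> ereal (lagrangian V w n Sl Su u (ps t) (p t) (q t) (r1 t) (r2 t))"
    by (simp add: assms(2))
  also have "\<dots> \<le> pd_inner V w n C Sl Su \<gamma> u"
    by (rule lagrangian_le_pd_inner[OF assms(1)]) (simp add: t_def)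
  finally show "ereal M \<le> pd_inner V w n C Sl Su \<gamma> u" .
qed

lemma lagrangian_no_flow:
  assumes "\<And>x y. w x y = w y x"
  shows "lagrangian V w n Sl Su u ps p (\<lambda>i x y. 0) r1 r2 =
       (\<Sum>x\<in>V. ps x * (1 - (\<Sum>i\<in>{1..n}. u i x))) + (\<Sum>i\<in>{1..n}. \<Sum>x\<in>V. u i x * p i x)
     + (\<Sum>i\<in>{1..n}. r1 i * (real (Sl i) - unorm V (u i)) + r2 i * (unorm V (u i) - real (Su i)))"
  using lagrangian_regrouped[where w = w and q = "\<lambda>i x y. 0", OF assms] by simp

lemma dual_box_no_flow:
  "\<lbrakk>\<And>i x. p i x \<le> C i x; \<And>i. 0 \<le> r1 i \<and> ereal (r1 i) \<le> \<gamma>; \<And>i. 0 \<le> r2 i \<and> ereal (r2 i) \<le> \<gamma>\<rbrakk>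
    \<Longrightarrow> dual_box V w n C \<gamma> p (\<lambda>i x y. 0) r1 r2"
  by (simp add: dual_box_def)

text \<open>Each violated constraint of the relaxation gives a ray of dual variables along which the
  Lagrangian grows linearly.\<close>

lemma pd_inner_not_partition:
  assumes "finite V" "\<And>x y. w x y = w y x" "0 \<le> \<gamma>" "x0 \<in> V" "(\<Sum>i\<in>{1..n}. u i x0) \<noteq> 1"
  shows "pd_inner V w n C Sl Su \<gamma> u = \<infinity>"
proof -
  define s where "s = 1 - (\<Sum>i\<in>{1..n}. u i x0)"
  show ?thesis
  proof (rule pd_inner_eq_infinity)
    show "dual_box V w n C \<gamma> C (\<lambda>i x y. 0) (\<lambda>i. 0) (\<lambda>i. 0)"
      using assms(3) by (intro dual_box_no_flow) (simp_all add: zero_ereal_def)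
    show "lagrangian V w n Sl Su u (\<lambda>x. of_bool (x = x0) * t * sgn s) C (\<lambda>i x y. 0) (\<lambda>i. 0) (\<lambda>i. 0)
        = (\<Sum>i\<in>{1..n}. \<Sum>x\<in>V. u i x * C i x) + t * \<bar>s\<bar>" for t
      using assms by (simp add: lagrangian_no_flow s_def mult.assoc sgn_mult_self)
    show "0 < \<bar>s\<bar>" using assms(5) by (simp add: s_def)
  qed
qed

lemma pd_inner_negative:
  assumes "finite V" "\<And>x y. w x y = w y x" "0 \<le> \<gamma>" "i0 \<in> {1..n}" "x0 \<in> V" "u i0 x0 < 0"
  shows "pd_inner V w n C Sl Su \<gamma> u = \<infinity>"
proof (rule pd_inner_eq_infinity)
  show "dual_box V w n C \<gamma> (\<lambda>i x. C i x - of_bool (i = i0 \<and> x = x0) * t) (\<lambda>i x y. 0) (\<lambda>i. 0) (\<lambda>i. 0)"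
    if "0 \<le> t" for t
    using that assms(3) by (intro dual_box_no_flow) (simp_all add: zero_ereal_def)
  have "(\<Sum>x\<in>V. u i x * (of_bool (i = i0 \<and> x = x0) * t)) = of_bool (i = i0) * (t * u i0 x0)" for i t
    using assms(1,5) by (cases "i = i0") (simp_all add: mult.left_commute[of "u _ _"])
  then show "lagrangian V w n Sl Su u (\<lambda>x. 0) (\<lambda>i x. C i x - of_bool (i = i0 \<and> x = x0) * t) (\<lambda>i x y. 0)
      (\<lambda>i. 0) (\<lambda>i. 0) = (\<Sum>i\<in>{1..n}. \<Sum>x\<in>V. u i x * C i x) + t * (- u i0 x0)" for t
    using assms(1,2,4) by (simp add: lagrangian_no_flow right_diff_distrib sum_subtractf)
  show "0 < - u i0 x0" using assms(6) by simp
qed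

lemma pd_inner_below_lower_size:
  assumes "\<And>x y. w x y = w y x" "\<gamma> = \<infinity>" "i0 \<in> {1..n}" "unorm V (u i0) < real (Sl i0)"
  shows "pd_inner V w n C Sl Su \<gamma> u = \<infinity>"
proof (rule pd_inner_eq_infinity)
  show "dual_box V w n C \<gamma> C (\<lambda>i x y. 0) (\<lambda>i. of_bool (i = i0) * t) (\<lambda>i. 0)" if "0 \<le> t" for t
    using that assms(2) by (intro dual_box_no_flow) (simp_all add: zero_ereal_def)
  show "lagrangian V w n Sl Su u (\<lambda>x. 0) C (\<lambda>i x y. 0) (\<lambda>i. of_bool (i = i0) * t) (\<lambda>i. 0)
      = (\<Sum>i\<in>{1..n}. \<Sum>x\<in>V. u i x * C i x) + t * (real (Sl i0) - unorm V (u i0))" for t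
    using assms(1,3) by (simp add: lagrangian_no_flow mult.assoc)
  show "0 < real (Sl i0) - unorm V (u i0)" using assms(4) by simp
qed

lemma pd_inner_above_upper_size:
  assumes "\<And>x y. w x y = w y x" "\<gamma> = \<infinity>" "i0 \<in> {1..n}" "real (Su i0) < unorm V (u i0)"
  shows "pd_inner V w n C Sl Su \<gamma> u = \<infinity>"
proof (rule pd_inner_eq_infinity)
  show "dual_box V w n C \<gamma> C (\<lambda>i x y. 0) (\<lambda>i. 0) (\<lambda>i. of_bool (i = i0) * t)" if "0 \<le> t" for t
    using that assms(2) by (intro dual_box_no_flow) (simp_all add: zero_ereal_def)
  show "lagrangian V w n Sl Su u (\<lambda>x. 0) C (\<lambda>i x y. 0) (\<lambda>i. 0) (\<lambda>i. of_bool (i = i0) * t)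
      = (\<Sum>i\<in>{1..n}. \<Sum>x\<in>V. u i x * C i x) + t * (unorm V (u i0) - real (Su i0))" for t
    using assms(1,3) by (simp add: lagrangian_no_flow mult.assoc)
  show "0 < unorm V (u i0) - real (Su i0)" using assms(4) by simp
qed

lemma pd_inner_infeasible:
  assumes "finite V" "\<And>x y. w x y = w y x" "0 \<le> \<gamma>" "u \<notin> relax_feasible V n Sl Su \<gamma>"
  shows "pd_inner V w n C Sl Su \<gamma> u = \<infinity>"
  using assms(4) unfolding relax_feasible_iff
  by (auto simp: not_le intro: pd_inner_not_partition[OF assms(1-3)] pd_inner_negative[OF assms(1-3)]
      pd_inner_below_lower_size[OF assms(2)] pd_inner_above_upper_size[OF assms(2)])

lemma pd_inner_eq:
  assumes "finite V" "\<And>x y. w x y = w y x" "\<And>x y. 0 \<le> w x y" "\<And>i. i \<in> {1..n} \<Longrightarrow> Sl i \<le> Su i" "0 \<le> \<gamma>"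
  shows "pd_inner V w n C Sl Su \<gamma> u =
    (if u \<in> relax_feasible V n Sl Su \<gamma> then ereal (relax_energy V w n C Sl Su \<gamma> u) else \<infinity>)"
proof (cases "u \<in> relax_feasible V n Sl Su \<gamma>")
  case True
  with assms(2-5) have "pd_inner V w n C Sl Su \<gamma> u = ereal (relax_energy V w n C Sl Su \<gamma> u)"
    by (rule pd_inner_feasible)
  with True show ?thesis by simp
next
  case False
  with assms(1,2,5) show ?thesis by (simp add: pd_inner_infeasible)
qed

lemma pd_value_eq_relax_value:
  assumes "finite V" "\<And>x y. w x y = w y x" "\<And>x y. 0 \<le> w x y" "\<And>i. i \<in> {1..n} \<Longrightarrow> Sl i \<le> Su i" "0 \<le> \<gamma>"
  shows "pd_value V w n C Sl Su \<gamma> = relax_value V w n C Sl Su \<gamma>"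
proof -
  have eq: "pd_inner V w n C Sl Su \<gamma> u =
      (if u \<in> relax_feasible V n Sl Su \<gamma> then ereal (relax_energy V w n C Sl Su \<gamma> u) else \<infinity>)" for u
    using assms by (rule pd_inner_eq)
  show ?thesis
    unfolding pd_value_def relax_value_def
  proof (intro antisym INF_greatest)
    fix u assume "u \<in> relax_feasible V n Sl Su \<gamma>"
    moreover have "(INF u. pd_inner V w n C Sl Su \<gamma> u) \<le> pd_inner V w n C Sl Su \<gamma> u"
      by (rule INF_lower) simp
    ultimately show "(INF u. pd_inner V w n C Sl Su \<gamma> u) \<le> ereal (relax_energy V w n C Sl Su \<gamma> u)"
      by (simp add: eq)
  next
    fix u
    show "(INF u\<in>relax_feasible V n Sl Su \<gamma>. ereal (relax_energy V w n C Sl Su \<gamma> u)) \<le> pd_inner V w n C Sl Su \<gamma> u"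
      by (simp add: eq INF_lower2)
  qed
qed

section \<open>Existence of a relaxed minimiser\<close>

lemma exists_between_with_sum:
  fixes l h :: "'i \<Rightarrow> real"
  assumes "finite I" "\<And>i. i \<in> I \<Longrightarrow> l i \<le> h i" "(\<Sum>i\<in>I. l i) \<le> N" "N \<le> (\<Sum>i\<in>I. h i)"
  shows "\<exists>t. (\<forall>i\<in>I. l i \<le> t i \<and> t i \<le> h i) \<and> (\<Sum>i\<in>I. t i) = N"
proof -
  define L H where "L = (\<Sum>i\<in>I. l i)" and "H = (\<Sum>i\<in>I. h i)"
  define \<theta> where "\<theta> = (if H = L then 0 else (N - L) / (H - L))"
  have \<theta>: "0 \<le> \<theta>" "\<theta> \<le> 1" "L + \<theta> * (H - L) = N"
    using assms(3,4) by (auto simp: \<theta>_def L_def H_def field_simps)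
  show ?thesis
  proof (intro exI conjI ballI)
    fix i assume "i \<in> I"
    then have "0 \<le> h i - l i" using assms(2) by simp
    then show "l i \<le> l i + \<theta> * (h i - l i)" "l i + \<theta> * (h i - l i) \<le> h i"
      using \<theta>(1,2) mult_left_le_one_le[of "h i - l i" \<theta>] by auto
  next
    show "(\<Sum>i\<in>I. l i + \<theta> * (h i - l i)) = N"
      using \<theta>(3) by (simp add: sum.distrib sum_distrib_left[symmetric] sum_subtractf L_def H_def)
  qed
qed

lemma relax_feasible_nonempty:
  assumes "finite V" "\<And>i. i \<in> {1..n} \<Longrightarrow> Sl i \<le> Su i"
    and "(\<Sum>i\<in>{1..n}. Sl i) \<le> card V" "card V \<le> (\<Sum>i\<in>{1..n}. Su i)"
  shows "\<exists>u. u \<in> relax_feasible V n Sl Su \<gamma>"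
proof -
  obtain t where t: "\<forall>i\<in>{1..n}. real (Sl i) \<le> t i \<and> t i \<le> real (Su i)" "(\<Sum>i\<in>{1..n}. t i) = real (card V)"
    using exists_between_with_sum[of "{1..n}" "\<lambda>i. real (Sl i)" "\<lambda>i. real (Su i)" "real (card V)"] assms(2-4)
    by (auto simp flip: of_nat_sum)
  define u where "u i x = t i / real (card V)" for i and x :: 'a
  show ?thesis
  proof (cases "V = {}")
    case True
    then show ?thesis using assms(3) by (auto simp: relax_feasible_iff unorm_def)
  next
    case False
    then have "0 < real (card V)" using assms(1) by (simp add: card_gt_0_iff)
    moreover have "0 \<le> t i" if "i \<in> {1..n}" for i using t(1) that by (meson of_nat_0_le_iff order_trans)
    ultimately have "u \<in> relax_feasible V n Sl Su \<gamma>"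
      using t by (auto simp: relax_feasible_iff u_def unorm_def sum_divide_distrib[symmetric])
    then show ?thesis by blast
  qed
qed

lemma continuous_on_coordinate2 [continuous_intros]: "continuous_on S (\<lambda>u :: 'i \<Rightarrow> 'j \<Rightarrow> real. u i x)"
  by (rule continuous_on_subset[of UNIV])
    (auto intro: continuous_on_product_then_coordinatewise continuous_on_product_coordinates)

lemma compact_PiE_UNIV:
  fixes A :: "'i \<Rightarrow> 'b::topological_space set"
  assumes "\<And>i. compact (A i)"
  shows "compact (PiE UNIV A)"
proof -
  have "compactin (product_topology (\<lambda>i. euclidean) UNIV) (PiE UNIV A)"
    using assms by (simp add: compactin_PiE)
  then show ?thesis by (simp add: euclidean_product_topology)
qed

lemma compact_pointwise_bounded:
  fixes S :: "'i \<Rightarrow> 'j \<Rightarrow> real set"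
  assumes "\<And>i x. compact (S i x)"
  shows "compact {u. \<forall>i x. u i x \<in> S i x}"
proof -
  have "{u. \<forall>i x. u i x \<in> S i x} = PiE UNIV (\<lambda>i. PiE UNIV (S i))" by (auto simp: PiE_iff)
  then show ?thesis using assms by (simp add: compact_PiE_UNIV)
qed

lemma P_pen_eq_max:
  "Sl i \<le> Su i \<Longrightarrow> P_pen g Sl Su i t = g * max 0 (t - real (Su i)) + g * max 0 (real (Sl i) - t)"
  by (auto simp: P_pen_def max_def)

lemma continuous_on_relax_energy:
  assumes "\<And>i. i \<in> {1..n} \<Longrightarrow> Sl i \<le> Su i"
  shows "continuous_on A (relax_energy V w n C Sl Su \<gamma>)"
proof -
  have "continuous_on A (\<lambda>u. size_penalty \<gamma> Sl Su i (unorm V (u i)))" if "i \<in> {1..n}" for i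
  proof (cases "0 < \<gamma> \<and> \<gamma> < \<infinity>")
    case True
    then show ?thesis
      unfolding size_penalty_def if_P[OF True] unorm_def
        P_pen_eq_max[where Sl = Sl and Su = Su and i = i, OF assms[OF that]]
      by (intro continuous_intros)
  next
    case False
    then show ?thesis unfolding size_penalty_def if_not_P[OF False] by simp
  qed
  then show ?thesis
    unfolding relax_energy_eq[abs_def] TV_w_def by (intro continuous_intros)
qed

lemma relax_energy_cong:
  assumes "\<And>i x. i \<in> {1..n} \<Longrightarrow> x \<in> V \<Longrightarrow> u i x = v i x"
  shows "relax_energy V w n C Sl Su \<gamma> u = relax_energy V w n C Sl Su \<gamma> v"
  using assms by (simp add: relax_energy_def TV_w_def unorm_def)

lemma closed_relax_feasible: "closed (relax_feasible V n Sl Su \<gamma>)"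
proof -
  have "relax_feasible V n Sl Su \<gamma> = (\<Inter>x\<in>V. \<Inter>i\<in>{1..n}. {u. 0 \<le> u i x \<and> u i x \<le> 1})
      \<inter> (\<Inter>x\<in>V. {u. (\<Sum>i\<in>{1..n}. u i x) = 1})
      \<inter> (if \<gamma> = \<infinity> then (\<Inter>i\<in>{1..n}. {u. real (Sl i) \<le> (\<Sum>x\<in>V. u i x) \<and> (\<Sum>x\<in>V. u i x) \<le> real (Su i)})
         else UNIV)"
    by (auto simp: relax_feasible_def Bprime_def unorm_def)
  then show ?thesis
    by (auto intro!: closed_Int closed_INT closed_Collect_conj closed_Collect_le closed_Collect_eq
        continuous_intros)
qed

lemma compact_relax_feasible_supported:
  "compact {u \<in> relax_feasible V n Sl Su \<gamma>. \<forall>i x. i \<notin> {1..n} \<or> x \<notin> V \<longrightarrow> u i x = 0}"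
proof -
  have "{u \<in> relax_feasible V n Sl Su \<gamma>. \<forall>i x. i \<notin> {1..n} \<or> x \<notin> V \<longrightarrow> u i x = 0}
      = {u. \<forall>i x. u i x \<in> (if i \<in> {1..n} \<and> x \<in> V then {0..1} else {0})} \<inter> relax_feasible V n Sl Su \<gamma>"
    by (auto simp: relax_feasible_def Bprime_def split: if_splits)
  then show ?thesis
    by (simp add: compact_Int_closed compact_pointwise_bounded closed_relax_feasible)
qed

lemma relax_energy_attains_min:
  assumes "finite V" "\<And>i. i \<in> {1..n} \<Longrightarrow> Sl i \<le> Su i"
    and "(\<Sum>i\<in>{1..n}. Sl i) \<le> card V" "card V \<le> (\<Sum>i\<in>{1..n}. Su i)"
  shows "\<exists>u\<in>relax_feasible V n Sl Su \<gamma>. \<forall>v\<in>relax_feasible V n Sl Su \<gamma>.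
           relax_energy V w n C Sl Su \<gamma> u \<le> relax_energy V w n C Sl Su \<gamma> v"
proof -
  \<comment> \<open>Truncating a feasible point to \<open>{1..n} \<times> V\<close> keeps it feasible and keeps its energy.\<close>
  define S where "S = {u \<in> relax_feasible V n Sl Su \<gamma>. \<forall>i x. i \<notin> {1..n} \<or> x \<notin> V \<longrightarrow> u i x = 0}"
  define trunc where "trunc v = (\<lambda>i x. if i \<in> {1..n} \<and> x \<in> V then v i x else 0)" for v :: "nat \<Rightarrow> 'a \<Rightarrow> real"
  have trunc: "trunc v \<in> S" "relax_energy V w n C Sl Su \<gamma> (trunc v) = relax_energy V w n C Sl Su \<gamma> v"
    if "v \<in> relax_feasible V n Sl Su \<gamma>" for v
  proof -
    have "(\<Sum>i\<in>{1..n}. trunc v i x) = (\<Sum>i\<in>{1..n}. v i x)" if "x \<in> V" for x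
      using that by (intro sum.cong) (auto simp: trunc_def)
    moreover have "unorm V (trunc v i) = unorm V (v i)" if "i \<in> {1..n}" for i
      using that by (auto simp: trunc_def unorm_def intro!: sum.cong)
    ultimately show "trunc v \<in> S"
      using \<open>v \<in> relax_feasible V n Sl Su \<gamma>\<close> by (auto simp: S_def relax_feasible_iff) (auto simp: trunc_def)
    show "relax_energy V w n C Sl Su \<gamma> (trunc v) = relax_energy V w n C Sl Su \<gamma> v"
      by (rule relax_energy_cong) (simp add: trunc_def)
  qed
  obtain v where "v \<in> relax_feasible V n Sl Su \<gamma>" using relax_feasible_nonempty[OF assms] by blast
  then have "S \<noteq> {}" using trunc(1) by blast
  moreover have "compact S" unfolding S_def by (rule compact_relax_feasible_supported)
  moreover have "continuous_on S (relax_energy V w n C Sl Su \<gamma>)"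
    using assms(2) by (rule continuous_on_relax_energy)
  ultimately obtain u where "u \<in> S" and min: "\<forall>y\<in>S. relax_energy V w n C Sl Su \<gamma> u \<le> relax_energy V w n C Sl Su \<gamma> y"
    using continuous_attains_inf by blast
  show ?thesis
  proof (intro bexI ballI)
    fix v assume "v \<in> relax_feasible V n Sl Su \<gamma>"
    then show "relax_energy V w n C Sl Su \<gamma> u \<le> relax_energy V w n C Sl Su \<gamma> v"
      using min trunc by metis
  qed (use \<open>u \<in> S\<close> in \<open>simp add: S_def\<close>)
qed

section \<open>Strong duality with the max-flow problem\<close>

text \<open>The variables of the max-flow problem: \<open>Source x\<close> is \<open>p\<^sub>s(x)\<close>, \<open>Sink i x\<close> is \<open>p\<^sub>i(x)\<close>,
  \<open>Flow i x y\<close> is \<open>q\<^sub>i(x,y)\<close>, and \<open>Lower i\<close>, \<open>Upper i\<close> are \<open>\<rho>\<^sub>i\<^sup>1\<close>, \<open>\<rho>\<^sub>i\<^sup>2\<close>.\<close>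

datatype 'v flow_var = Source 'v | Sink nat 'v | Flow nat 'v 'v | Lower nat | Upper nat

definition flow_vars :: "'v set \<Rightarrow> nat \<Rightarrow> 'v flow_var set" where
  "flow_vars V n = Source ` V \<union> (\<lambda>(i, x). Sink i x) ` ({1..n} \<times> V)
     \<union> (\<lambda>(i, x, y). Flow i x y) ` ({1..n} \<times> V \<times> V) \<union> Lower ` {1..n} \<union> Upper ` {1..n}"

definition box_constraints ::
  "'v set \<Rightarrow> ('v \<Rightarrow> 'v \<Rightarrow> real) \<Rightarrow> nat \<Rightarrow> (nat \<Rightarrow> 'v \<Rightarrow> real) \<Rightarrow> ereal \<Rightarrow>
   ((('v flow_var \<Rightarrow> real) \<Rightarrow> real) \<times> real) set" where
  "box_constraints V w n C \<gamma> =
     (\<lambda>(i, x, y). (\<lambda>z. z (Flow i x y), 1)) ` {(i, x, y). i \<in> {1..n} \<and> x \<in> V \<and> y \<in> V \<and> 0 < w x y}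
   \<union> (\<lambda>(i, x, y). (\<lambda>z. - z (Flow i x y), 1)) ` {(i, x, y). i \<in> {1..n} \<and> x \<in> V \<and> y \<in> V \<and> 0 < w x y}
   \<union> (\<lambda>(i, x). (\<lambda>z. z (Sink i x), C i x)) ` ({1..n} \<times> V)
   \<union> (\<lambda>i. (\<lambda>z. - z (Lower i), 0)) ` {1..n} \<union> (\<lambda>i. (\<lambda>z. - z (Upper i), 0)) ` {1..n}
   \<union> (if \<gamma> = \<infinity> then {} else
       (\<lambda>i. (\<lambda>z. z (Lower i), real_of_ereal \<gamma>)) ` {1..n} \<union> (\<lambda>i. (\<lambda>z. z (Upper i), real_of_ereal \<gamma>)) ` {1..n})"

definition flow_equation :: "'v set \<Rightarrow> ('v \<Rightarrow> 'v \<Rightarrow> real) \<Rightarrow> nat \<times> 'v \<Rightarrow> ('v flow_var \<Rightarrow> real) \<Rightarrow> real" where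
  "flow_equation V w = (\<lambda>(i, x) z. div_w V w (\<lambda>a b. z (Flow i a b)) x - z (Source x) + z (Sink i x)
     - z (Lower i) + z (Upper i))"

definition flow_objective :: "'v set \<Rightarrow> nat \<Rightarrow> (nat \<Rightarrow> nat) \<Rightarrow> (nat \<Rightarrow> nat) \<Rightarrow> ('v flow_var \<Rightarrow> real) \<Rightarrow> real" where
  "flow_objective V n Sl Su z = flow_obj V n Sl Su (\<lambda>x. z (Source x)) (\<lambda>i. z (Lower i)) (\<lambda>i. z (Upper i))"

lemma finite_flow_vars: "finite V \<Longrightarrow> finite (flow_vars V n)"
  by (simp add: flow_vars_def)

lemma finite_box_constraints: "finite V \<Longrightarrow> finite (box_constraints V w n C \<gamma>)"
proof -
  assume "finite V"
  moreover have "{(i, x, y). i \<in> {1..n} \<and> x \<in> V \<and> y \<in> V \<and> 0 < w x y} \<subseteq> {1..n} \<times> V \<times> V" by auto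
  ultimately have "finite {(i, x, y). i \<in> {1..n} \<and> x \<in> V \<and> y \<in> V \<and> 0 < w x y}"
    by (meson finite_SigmaI finite_atLeastAtMost finite_subset)
  with \<open>finite V\<close> show ?thesis by (simp add: box_constraints_def)
qed

lemma box_constraints_iff_dual_box:
  assumes "0 \<le> \<gamma>"
  shows "(\<forall>k\<in>box_constraints V w n C \<gamma>. fst k z \<le> snd k) \<longleftrightarrow>
    dual_box V w n C \<gamma> (\<lambda>i x. z (Sink i x)) (\<lambda>i x y. z (Flow i x y)) (\<lambda>i. z (Lower i)) (\<lambda>i. z (Upper i))"
proof -
  have "(\<forall>k\<in>box_constraints V w n C \<gamma>. fst k z \<le> snd k) \<longleftrightarrow>
    (\<forall>i\<in>{1..n}. (\<forall>x\<in>V. \<forall>y\<in>V. 0 < w x y \<longrightarrow> \<bar>z (Flow i x y)\<bar> \<le> 1) \<and> (\<forall>x\<in>V. z (Sink i x) \<le> C i x)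
      \<and> 0 \<le> z (Lower i) \<and> 0 \<le> z (Upper i)
      \<and> (\<gamma> \<noteq> \<infinity> \<longrightarrow> z (Lower i) \<le> real_of_ereal \<gamma> \<and> z (Upper i) \<le> real_of_ereal \<gamma>))"
    unfolding box_constraints_def by (cases "\<gamma> = \<infinity>") (auto simp: ball_Un Ball_image_comp abs_le_iff)
  moreover have "ereal r \<le> \<gamma> \<longleftrightarrow> \<gamma> = \<infinity> \<or> r \<le> real_of_ereal \<gamma>" for r
    using assms by (cases \<gamma>) auto
  ultimately show ?thesis unfolding dual_box_def by auto
qed

lemma flow_vars_memberI:
  "x \<in> V \<Longrightarrow> Source x \<in> flow_vars V n"
  "i \<in> {1..n} \<Longrightarrow> x \<in> V \<Longrightarrow> Sink i x \<in> flow_vars V n"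
  "i \<in> {1..n} \<Longrightarrow> x \<in> V \<Longrightarrow> y \<in> V \<Longrightarrow> Flow i x y \<in> flow_vars V n"
  "i \<in> {1..n} \<Longrightarrow> Lower i \<in> flow_vars V n"
  "i \<in> {1..n} \<Longrightarrow> Upper i \<in> flow_vars V n"
  unfolding flow_vars_def by (force intro: image_eqI[of _ _ "(i, x)"] image_eqI[of _ _ "(i, x, y)"])+

lemma linear_form_box_constraints:
  "finite V \<Longrightarrow> k \<in> box_constraints V w n C \<gamma> \<Longrightarrow> linear_form (flow_vars V n) (fst k)"
  by (auto simp: box_constraints_def split: if_splits
      intro!: linear_form_intros finite_flow_vars flow_vars_memberI)

lemma linear_form_flow_equation:
  "finite V \<Longrightarrow> j \<in> {1..n} \<times> V \<Longrightarrow> linear_form (flow_vars V n) (flow_equation V w j)"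
  by (auto simp: flow_equation_def div_w_def intro!: linear_form_intros finite_flow_vars flow_vars_memberI)

lemma linear_form_flow_objective:
  "finite V \<Longrightarrow> linear_form (flow_vars V n) (flow_objective V n Sl Su)"
  by (auto simp: flow_objective_def[abs_def] flow_obj_def intro!: linear_form_intros finite_flow_vars flow_vars_memberI)

definition flow_assignment ::
  "('v \<Rightarrow> real) \<Rightarrow> (nat \<Rightarrow> 'v \<Rightarrow> real) \<Rightarrow> (nat \<Rightarrow> 'v \<Rightarrow> 'v \<Rightarrow> real) \<Rightarrow> (nat \<Rightarrow> real) \<Rightarrow> (nat \<Rightarrow> real) \<Rightarrow>
   'v flow_var \<Rightarrow> real" where
  "flow_assignment ps p q r1 r2 t = (case t of Source x \<Rightarrow> ps x | Sink i x \<Rightarrow> p i x | Flow i x y \<Rightarrow> q i x y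
     | Lower i \<Rightarrow> r1 i | Upper i \<Rightarrow> r2 i)"

lemma lagrangian_eq_flow_objective:
  "lagrangian V w n Sl Su (\<lambda>i x. u (i, x)) ps p q r1 r2 =
     flow_objective V n Sl Su (flow_assignment ps p q r1 r2)
     + (\<Sum>j\<in>{1..n} \<times> V. u j * flow_equation V w j (flow_assignment ps p q r1 r2))"
  by (simp add: lagrangian_def flow_objective_def flow_assignment_def flow_equation_def
      sum.cartesian_product' algebra_simps)

lemma flow_problem_feasible:
  assumes "0 \<le> \<gamma>"
  shows "\<exists>z. (\<forall>k\<in>box_constraints V w n C \<gamma>. fst k z \<le> snd k) \<and> (\<forall>j\<in>{1..n} \<times> V. flow_equation V w j z = 0)"
proof -
  \<comment> \<open>Route nothing through the graph: \<open>p\<^sub>s = p\<^sub>i\<close> below every \<open>C\<^sub>i\<close>, all other variables zero.\<close>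
  define S where "S x = - (\<Sum>i\<in>{1..n}. \<bar>C i x\<bar>)" for x
  have "S x \<le> C i x" if "i \<in> {1..n}" for i x
    using member_le_sum[of i "{1..n}" "\<lambda>i. \<bar>C i x\<bar>"] that by (simp add: S_def)
  then have "dual_box V w n C \<gamma> (\<lambda>i. S) (\<lambda>i x y. 0) (\<lambda>i. 0) (\<lambda>i. 0)"
    using assms by (simp add: dual_box_def zero_ereal_def[symmetric])
  then show ?thesis
    by (intro exI[of _ "flow_assignment S (\<lambda>i. S) (\<lambda>i x y. 0) (\<lambda>i. 0) (\<lambda>i. 0)"])
      (auto simp: box_constraints_iff_dual_box[OF assms] flow_assignment_def flow_equation_def div_w_def)
qed

lemma flow_objective_le_maxflow_value:
  assumes "0 \<le> \<gamma>" "\<forall>k\<in>box_constraints V w n C \<gamma>. fst k z \<le> snd k"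
    and "\<forall>j\<in>{1..n} \<times> V. flow_equation V w j z = 0"
  shows "ereal (flow_objective V n Sl Su z) \<le> maxflow_value V w n C Sl Su \<gamma>"
  unfolding maxflow_value_def flow_objective_def
proof (rule Sup_upper, intro CollectI exI conjI)
  show "dual_box V w n C \<gamma> (\<lambda>i x. z (Sink i x)) (\<lambda>i x y. z (Flow i x y)) (\<lambda>i. z (Lower i)) (\<lambda>i. z (Upper i))"
    using assms(2) box_constraints_iff_dual_box[OF assms(1)] by blast
  show "\<forall>i\<in>{1..n}. \<forall>x\<in>V. div_w V w (\<lambda>x y. z (Flow i x y)) x - z (Source x) + z (Sink i x)
      = z (Lower i) - z (Upper i)"
  proof (intro ballI)
    fix i x assume "i \<in> {1..n}" "x \<in> V"
    then have "flow_equation V w (i, x) z = 0" using assms(3) by blast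
    then show "div_w V w (\<lambda>x y. z (Flow i x y)) x - z (Source x) + z (Sink i x) = z (Lower i) - z (Upper i)"
      by (simp add: flow_equation_def)
  qed
qed simp

lemma pd_value_le_maxflow_value:
  assumes "finite V" "0 \<le> \<gamma>" "pd_value V w n C Sl Su \<gamma> = ereal v"
  shows "pd_value V w n C Sl Su \<gamma> \<le> maxflow_value V w n C Sl Su \<gamma>"
proof (rule ccontr)
  assume "\<not> ?thesis"
  then have below: "maxflow_value V w n C Sl Su \<gamma> < ereal v" using assms(3) by simp
  let ?K = "box_constraints V w n C \<gamma>"
  have "\<exists>u B. B < v \<and> (\<forall>z. (\<forall>k\<in>?K. fst k z \<le> snd k) \<longrightarrow>
      flow_objective V n Sl Su z + (\<Sum>j\<in>{1..n} \<times> V. u j * (flow_equation V w j z - 0)) \<le> B)"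
  proof (rule lagrange_duality[where X = "flow_vars V n"])
    show "\<exists>z. (\<forall>k\<in>?K. fst k z \<le> snd k) \<and> (\<forall>j\<in>{1..n} \<times> V. flow_equation V w j z = 0)"
      using assms(2) by (rule flow_problem_feasible)
  next
    fix z assume "\<forall>k\<in>?K. fst k z \<le> snd k" "\<forall>j\<in>{1..n} \<times> V. flow_equation V w j z = 0"
    then have "ereal (flow_objective V n Sl Su z) < ereal v"
      using below by (intro le_less_trans[OF flow_objective_le_maxflow_value[OF assms(2)]])
    then show "flow_objective V n Sl Su z < v" by simp
  qed (use assms(1) in \<open>auto intro: finite_flow_vars finite_box_constraints
      linear_form_box_constraints linear_form_flow_equation linear_form_flow_objective\<close>)
  then obtain u B where "B < v" and bound: "\<And>z. \<forall>k\<in>?K. fst k z \<le> snd k \<Longrightarrow>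
      flow_objective V n Sl Su z + (\<Sum>j\<in>{1..n} \<times> V. u j * flow_equation V w j z) \<le> B"
    by auto
  have "pd_inner V w n C Sl Su \<gamma> (\<lambda>i x. u (i, x)) \<le> ereal B"
  proof (rule pd_inner_le)
    fix ps p q r1 r2 assume "dual_box V w n C \<gamma> p q r1 r2"
    then show "lagrangian V w n Sl Su (\<lambda>i x. u (i, x)) ps p q r1 r2 \<le> B"
      unfolding lagrangian_eq_flow_objective
      by (intro bound) (simp add: box_constraints_iff_dual_box[OF assms(2)] flow_assignment_def)
  qed
  also have "\<dots> < pd_value V w n C Sl Su \<gamma>" using \<open>B < v\<close> assms(3) by simp
  also have "\<dots> \<le> pd_inner V w n C Sl Su \<gamma> (\<lambda>i x. u (i, x))" unfolding pd_value_def by (rule INF_lower) simp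
  finally show False by simp
qed

theorem theorem4:
  fixes V :: "'v set" and w :: "'v \<Rightarrow> 'v \<Rightarrow> real" and n :: nat
    and C :: "nat \<Rightarrow> 'v \<Rightarrow> real" and Sl Su :: "nat \<Rightarrow> nat" and \<gamma> :: ereal
  assumes "finite V"
    and "\<And>x y. w x y = w y x"
    and "\<And>x y. w x y \<ge> 0"
    and "n \<ge> 2"
    and "\<And>i. i \<in> {1..n} \<Longrightarrow> Sl i \<le> Su i"
    and "(\<Sum>i\<in>{1..n}. Sl i) \<le> card V" and "card V \<le> (\<Sum>i\<in>{1..n}. Su i)"
    and "0 \<le> \<gamma>"
  shows "maxflow_value V w n C Sl Su \<gamma> = pd_value V w n C Sl Su \<gamma>
       \<and> pd_value V w n C Sl Su \<gamma> = relax_value V w n C Sl Su \<gamma>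
       \<and> (\<exists>u. pd_inner V w n C Sl Su \<gamma> u = pd_value V w n C Sl Su \<gamma>)
       \<and> (\<exists>u\<in>relax_feasible V n Sl Su \<gamma>.
             ereal (relax_energy V w n C Sl Su \<gamma> u) = relax_value V w n C Sl Su \<gamma>)"
proof -
  obtain u where u: "u \<in> relax_feasible V n Sl Su \<gamma>"
    and min: "\<forall>v\<in>relax_feasible V n Sl Su \<gamma>. relax_energy V w n C Sl Su \<gamma> u \<le> relax_energy V w n C Sl Su \<gamma> v"
    using assms(1,5-7) by (blast dest: relax_energy_attains_min)
  have relax: "relax_value V w n C Sl Su \<gamma> = ereal (relax_energy V w n C Sl Su \<gamma> u)"
    unfolding relax_value_def using u min by (intro antisym INF_lower INF_greatest) auto
  have pd: "pd_value V w n C Sl Su \<gamma> = relax_value V w n C Sl Su \<gamma>"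
    using assms(1-3,5,8) by (rule pd_value_eq_relax_value)
  have inner: "pd_inner V w n C Sl Su \<gamma> u = ereal (relax_energy V w n C Sl Su \<gamma> u)"
    using assms(2,3,5,8) u by (rule pd_inner_feasible)
  have "maxflow_value V w n C Sl Su \<gamma> = pd_value V w n C Sl Su \<gamma>"
  proof (rule antisym)
    show "pd_value V w n C Sl Su \<gamma> \<le> maxflow_value V w n C Sl Su \<gamma>"
      using pd relax by (intro pd_value_le_maxflow_value[OF assms(1,8)]) simp
  qed (rule maxflow_value_le_pd_value)
  then show ?thesis using pd relax inner u by auto
qed

end
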